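(* Let $A=\mathbb{C}[x,y,z]$ and let $a,b,c,d\in A$ with $d\neq 0$. Then the triples $c\,\mathrm{grad}(a)$ and $d\,\mathrm{grad}(b)$ are compatible if and only if $\det \mathrm{Jac}(a,b,cd^{-1})=0$ (in $Q(A)$).
   Context: $\mathrm{grad}(a)=(a_x,a_y,a_z)$, subscripts being partial derivatives, and $\mathrm{Jac}(f,g,h)$ is the $3\times3$ matrix with rows $\mathrm{grad}(f),\mathrm{grad}(g),\mathrm{grad}(h)$. A triple $F=(f,g,h)$ is a Poisson triple if there is a Poisson bracket with $\{y,z\}=f$, $\{z,x\}=g$, $\{x,y\}=h$. Two Poisson triples $F,G$ are compatible if $\lambda F+\mu G$ is a Poisson triple for all $\lambda,\mu\in\mathbb{C}$. *)

theory Defs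
  imports "HOL-Computational_Algebra.Polynomial" "HOL-Computational_Algebra.Fraction_Field"
begin

text \<open>A = C[x,y,z], realised as nested univariate polynomials: the outermost
  variable is z, the middle one y, the innermost one x.\<close>
type_synonym A = "complex poly poly poly"

definition const3 :: "complex \<Rightarrow> A" where
  "const3 c = [:[:[:c:]:]:]"

definition varx :: A where "varx = [:[:[:0, 1:]:]:]"
definition vary :: A where "vary = [:[:0, 1:]:]"
definition varz :: A where "varz = [:0, 1:]"

definition dx :: "A \<Rightarrow> A" where "dx p = map_poly (map_poly pderiv) p"
definition dy :: "A \<Rightarrow> A" where "dy p = map_poly pderiv p"
definition dz :: "A \<Rightarrow> A" where "dz p = pderiv p"

definition grad :: "A \<Rightarrow> A \<times> A \<times> A" where
  "grad a = (dx a, dy a, dz a)"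

definition scale3 :: "A \<Rightarrow> A \<times> A \<times> A \<Rightarrow> A \<times> A \<times> A" where
  "scale3 c F = (case F of (f, g, h) \<Rightarrow> (c * f, c * g, c * h))"

definition poisson_bracket :: "(A \<Rightarrow> A \<Rightarrow> A) \<Rightarrow> bool" where
  "poisson_bracket br \<longleftrightarrow>
     (\<forall>p q r. br (p + q) r = br p r + br q r) \<and>
     (\<forall>c p q. br (const3 c * p) q = const3 c * br p q) \<and>
     (\<forall>p q. br p q = - br q p) \<and>
     (\<forall>p q r. br p (q * r) = br p q * r + q * br p r) \<and>
     (\<forall>p q r. br p (br q r) + br q (br r p) + br r (br p q) = 0)"

definition poisson_triple :: "A \<times> A \<times> A \<Rightarrow> bool" where
  "poisson_triple F \<longleftrightarrow> (case F of (f, g, h) \<Rightarrow>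
     (\<exists>br. poisson_bracket br \<and> br vary varz = f \<and> br varz varx = g \<and> br varx vary = h))"

definition lincomb3 :: "complex \<Rightarrow> A \<times> A \<times> A \<Rightarrow> complex \<Rightarrow> A \<times> A \<times> A \<Rightarrow> A \<times> A \<times> A" where
  "lincomb3 l F m G = (case F of (f1, g1, h1) \<Rightarrow> case G of (f2, g2, h2) \<Rightarrow>
     (const3 l * f1 + const3 m * f2, const3 l * g1 + const3 m * g2, const3 l * h1 + const3 m * h2))"

definition compatible :: "A \<times> A \<times> A \<Rightarrow> A \<times> A \<times> A \<Rightarrow> bool" where
  "compatible F G \<longleftrightarrow> (\<forall>l m. poisson_triple (lincomb3 l F m G))"

definition emb :: "A \<Rightarrow> A fract" where "emb p = Fract p 1"

definition fderiv :: "(A \<Rightarrow> A) \<Rightarrow> A fract \<Rightarrow> A fract" where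
  "fderiv D r = (SOME s. \<exists>p q. q \<noteq> 0 \<and> r = Fract p q \<and> s = Fract (D p * q - p * D q) (q ^ 2))"

definition fgrad :: "A fract \<Rightarrow> A fract \<times> A fract \<times> A fract" where
  "fgrad r = (fderiv dx r, fderiv dy r, fderiv dz r)"

definition det3 :: "'a::comm_ring_1 \<times> 'a \<times> 'a \<Rightarrow> 'a \<times> 'a \<times> 'a \<Rightarrow> 'a \<times> 'a \<times> 'a \<Rightarrow> 'a" where
  "det3 u v w = (case u of (u1, u2, u3) \<Rightarrow> case v of (v1, v2, v3) \<Rightarrow> case w of (w1, w2, w3) \<Rightarrow>
     u1 * (v2 * w3 - v3 * w2) - u2 * (v1 * w3 - v3 * w1) + u3 * (v1 * w2 - v2 * w1))"

definition detJac :: "A fract \<Rightarrow> A fract \<Rightarrow> A fract \<Rightarrow> A fract" where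
  "detJac f g h = det3 (fgrad f) (fgrad g) (fgrad h)"

end

theory Submission
  imports Defs
begin

text \<open>A triple \<open>H\<close> determines the bracket \<open>{p, q} = det(H, \<nabla>p, \<nabla>q)\<close>, and conversely every
  Poisson bracket on \<open>\<complex>[x,y,z]\<close> is of this form, being a biderivation that kills the
  constants. The Jacobiator of this bracket is \<open>-(H \<cdot> curl H) det(\<nabla>p, \<nabla>q, \<nabla>r)\<close>, so \<open>H\<close> is a
  Poisson triple iff \<open>H \<cdot> curl H = 0\<close>. For \<open>H = \<lambda> c\<nabla>a + \<mu> d\<nabla>b\<close> the pure terms vanish, as
  \<open>curl (c\<nabla>a) = \<nabla>c \<times> \<nabla>a\<close> is orthogonal to \<open>\<nabla>a\<close>, and the mixed term is
  \<open>\<lambda>\<mu> (d det(\<nabla>a, \<nabla>b, \<nabla>c) - c det(\<nabla>a, \<nabla>b, \<nabla>d))\<close>, which is \<open>\<lambda>\<mu> d\<^sup>2 det Jac(a, b, c/d)\<close>.\<close>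

locale derivation = additive D for D :: "'a::comm_ring_1 \<Rightarrow> 'a" +
  assumes mult: "D (x * y) = D x * y + x * D y"

lemma (in derivation) one: "D 1 = 0"
  using mult[of 1 1] by simp

lemma derivation_map_poly:
  assumes "derivation D"
  shows "derivation (map_poly D)"
proof -
  interpret derivation D by fact
  show ?thesis
  proof
    show "map_poly D (p + q) = map_poly D p + map_poly D q" for p q
      by (intro poly_eqI) (simp add: coeff_map_poly zero add)
    show "map_poly D (p * q) = map_poly D p * q + p * map_poly D q" for p q
      by (intro poly_eqI) (simp add: coeff_map_poly coeff_mult zero add mult sum sum.distrib)
  qed
qed

lemma derivation_pderiv: "derivation (pderiv :: 'a::idom poly \<Rightarrow> 'a poly)"
  by unfold_locales (simp_all add: pderiv_add pderiv_mult algebra_simps)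

lemma pderiv_map_poly_commute:
  fixes D :: "'a::idom \<Rightarrow> 'a"
  assumes "additive D"
  shows "pderiv (map_poly D p) = map_poly D (pderiv p)"
proof -
  interpret additive D by fact
  have "D (of_nat n * x) = of_nat n * D x" for n x
    by (induction n) (simp_all add: zero add algebra_simps)
  then show ?thesis
    by (intro poly_eqI) (simp add: coeff_map_poly zero coeff_pderiv del: of_nat_Suc)
qed

interpretation dx: derivation dx
  unfolding dx_def by (intro derivation_map_poly derivation_pderiv)

interpretation dy: derivation dy
  unfolding dy_def by (intro derivation_map_poly derivation_pderiv)

interpretation dz: derivation dz
  unfolding dz_def by (rule derivation_pderiv)

lemma dz_dy_commute: "dz (dy p) = dy (dz p)"
  unfolding dy_def dz_def by (intro pderiv_map_poly_commute derivation.axioms(1) derivation_pderiv)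

lemma dz_dx_commute: "dz (dx p) = dx (dz p)"
  unfolding dx_def dz_def
  by (intro pderiv_map_poly_commute derivation.axioms(1) derivation_map_poly derivation_pderiv)

lemma dy_dx_commute: "dy (dx p) = dx (dy p)"
proof -
  have "dy (dx p) = map_poly (\<lambda>q. pderiv (map_poly pderiv q)) p"
    unfolding dx_def dy_def by (simp add: map_poly_map_poly o_def)
  also have "\<dots> = map_poly (\<lambda>q. map_poly pderiv (pderiv q)) p"
    by (intro map_poly_cong pderiv_map_poly_commute derivation.axioms(1) derivation_pderiv refl)
  also have "\<dots> = dx (dy p)"
    unfolding dx_def dy_def by (simp add: map_poly_map_poly o_def)
  finally show ?thesis .
qed

lemmas partial_rules = dx.add dy.add dz.add dx.mult dy.mult dz.mult dx.minus dy.minus dz.minus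
  dx.diff dy.diff dz.diff dy_dx_commute dz_dx_commute dz_dy_commute

lemma partial_const3: "dx (const3 c) = 0" "dy (const3 c) = 0" "dz (const3 c) = 0"
  by (simp_all add: dx_def dy_def dz_def const3_def map_poly_pCons)

lemma partial_vars:
  "dx varx = 1" "dy varx = 0" "dz varx = 0"
  "dx vary = 0" "dy vary = 1" "dz vary = 0"
  "dx varz = 0" "dy varz = 0" "dz varz = 1"
  by (simp_all add: dx_def dy_def dz_def varx_def vary_def varz_def pderiv_pCons map_poly_pCons one_pCons)

definition dot3 :: "'a::comm_ring_1 \<times> 'a \<times> 'a \<Rightarrow> 'a \<times> 'a \<times> 'a \<Rightarrow> 'a" where
  "dot3 u v = (case u of (u1, u2, u3) \<Rightarrow> case v of (v1, v2, v3) \<Rightarrow> u1 * v1 + u2 * v2 + u3 * v3)"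

definition curl :: "A \<times> A \<times> A \<Rightarrow> A \<times> A \<times> A" where
  "curl H = (case H of (f, g, h) \<Rightarrow> (dy h - dz g, dz f - dx h, dx g - dy f))"

definition bracket :: "A \<times> A \<times> A \<Rightarrow> A \<Rightarrow> A \<Rightarrow> A" where
  "bracket H p q = det3 H (grad p) (grad q)"

lemma bracket_jacobi:
  "bracket H p (bracket H q r) + bracket H q (bracket H r p) + bracket H r (bracket H p q) =
     - dot3 H (curl H) * det3 (grad p) (grad q) (grad r)"
proof -
  obtain f g h where H: "H = (f, g, h)" by (cases H)
  show ?thesis
    unfolding H bracket_def dot3_def curl_def det3_def grad_def by (simp add: partial_rules) algebra
qed

lemma poisson_bracket_bracket:
  assumes "dot3 H (curl H) = 0"
  shows "poisson_bracket (bracket H)"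
proof -
  obtain f g h where H: "H = (f, g, h)" by (cases H)
  show ?thesis
    unfolding poisson_bracket_def
    by (simp add: bracket_jacobi assms)
      (simp add: H bracket_def det3_def grad_def partial_rules partial_const3 algebra_simps)
qed

lemma A_induct [case_names const varx vary varz add mult]:
  assumes const: "\<And>c. P (const3 c)" and varx: "P varx" and vary: "P vary" and varz: "P varz"
    and add: "\<And>p q. P p \<Longrightarrow> P q \<Longrightarrow> P (p + q)" and mult: "\<And>p q. P p \<Longrightarrow> P q \<Longrightarrow> P (p * q)"
  shows "P f"
proof -
  have P1: "P [:[:u:]:]" for u
  proof (induction u rule: pCons_induct)
    case 0
    then show ?case using const[of 0] by (simp add: const3_def)
  next
    case (pCons e u)
    have "[:[:pCons e u:]:] = const3 e + varx * [:[:u:]:]"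
      by (simp add: const3_def varx_def)
    then show ?case by (metis const varx pCons(2) add mult)
  qed
  have P2: "P [:v:]" for v
  proof (induction v rule: pCons_induct)
    case 0
    then show ?case using P1[of 0] by simp
  next
    case (pCons u v)
    have "[:pCons u v:] = [:[:u:]:] + vary * [:v:]"
      by (simp add: vary_def)
    then show ?case by (metis P1 vary pCons(2) add mult)
  qed
  show ?thesis
  proof (induction f rule: pCons_induct)
    case 0
    then show ?case using P2[of 0] by simp
  next
    case (pCons v f)
    have "pCons v f = [:v:] + varz * f"
      by (simp add: varz_def)
    then show ?case by (metis P2 varz pCons(2) add mult)
  qed
qed

lemma derivation_chain_rule:
  assumes "derivation D" and const: "\<And>c. D (const3 c) = 0"
  shows "D f = dx f * D varx + dy f * D vary + dz f * D varz"
proof -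
  interpret derivation D by fact
  show ?thesis
    by (induction f rule: A_induct)
      (simp_all add: const partial_const3 partial_vars partial_rules add mult algebra_simps)
qed

lemma poisson_bracket_eq_bracket:
  assumes "poisson_bracket br"
  shows "br = bracket (br vary varz, br varz varx, br varx vary)"
proof -
  have antisym: "br p q = - br q p" for p q
    using assms unfolding poisson_bracket_def by blast
  have derivation: "derivation (br p)" for p
  proof
    show "br p (q + r) = br p q + br p r" for q r
      using assms unfolding poisson_bracket_def by (metis antisym minus_add_distrib)
    show "br p (q * r) = br p q * r + q * br p r" for q r
      using assms unfolding poisson_bracket_def by blast
  qed
  have "br p (const3 c) = 0" for p c
  proof -
    have "br (const3 c * 1) p = const3 c * br 1 p"
      using assms unfolding poisson_bracket_def by blast
    moreover have "br 1 p = 0"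
      using antisym[of 1 p] derivation.one[OF derivation] by simp
    ultimately show ?thesis
      using antisym[of p "const3 c"] by simp
  qed
  then have chain: "br p q = dx q * br p varx + dy q * br p vary + dz q * br p varz" for p q
    using derivation by (intro derivation_chain_rule)
  have chain_left: "br p v = - (dx p * br v varx + dy p * br v vary + dz p * br v varz)" for p v
    using antisym[of p v] chain[of v p] by simp
  have "br p q = bracket (br vary varz, br varz varx, br varx vary) p q" for p q
    unfolding chain[of p q] chain_left[of p varx] chain_left[of p vary] chain_left[of p varz]
    using antisym[of varx varz] antisym[of vary varx] antisym[of varz vary]
      antisym[of varx varx] antisym[of vary vary] antisym[of varz varz]
    by (simp add: bracket_def det3_def grad_def algebra_simps)
  then show ?thesis by blast
qed

lemma poisson_triple_iff_dot_curl: "poisson_triple H \<longleftrightarrow> dot3 H (curl H) = 0"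
proof
  assume "dot3 H (curl H) = 0"
  then have "poisson_bracket (bracket H)" by (rule poisson_bracket_bracket)
  then show "poisson_triple H"
    unfolding poisson_triple_def
    by (cases H) (auto simp: bracket_def det3_def grad_def partial_vars)
next
  assume "poisson_triple H"
  then obtain br where "poisson_bracket br" and H: "H = (br vary varz, br varz varx, br varx vary)"
    unfolding poisson_triple_def by (cases H) auto
  then have "poisson_bracket (bracket H)" and "br = bracket H"
    using poisson_bracket_eq_bracket by auto
  then have "bracket H varx (bracket H vary varz) + bracket H vary (bracket H varz varx)
      + bracket H varz (bracket H varx vary) = 0"
    unfolding poisson_bracket_def by blast
  then show "dot3 H (curl H) = 0"
    by (simp add: bracket_jacobi det3_def grad_def partial_vars)
qed

lemma dot_curl_lincomb:
  "dot3 (lincomb3 l (scale3 c (grad a)) m (scale3 d (grad b)))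
        (curl (lincomb3 l (scale3 c (grad a)) m (scale3 d (grad b)))) =
     const3 l * const3 m * (d * det3 (grad a) (grad b) (grad c) - c * det3 (grad a) (grad b) (grad d))"
  unfolding dot3_def curl_def lincomb3_def scale3_def grad_def det3_def
  by (simp add: partial_rules partial_const3) algebra

lemma compatible_iff_det3:
  "compatible (scale3 c (grad a)) (scale3 d (grad b)) \<longleftrightarrow>
     d * det3 (grad a) (grad b) (grad c) = c * det3 (grad a) (grad b) (grad d)"
proof -
  have "const3 1 = 1"
    by (simp add: const3_def one_pCons)
  then show ?thesis
    unfolding compatible_def poisson_triple_iff_dot_curl dot_curl_lincomb
    by (metis mult_1 mult_zero_right right_minus_eq)
qed

lemma fderiv_Fract:
  assumes "derivation D" and "q \<noteq> 0"
  shows "fderiv D (Fract p q) = Fract (D p * q - p * D q) (q ^ 2)"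
  unfolding fderiv_def
proof (rule someI2)
  show "\<exists>p' q'. q' \<noteq> 0 \<and> Fract p q = Fract p' q' \<and>
      Fract (D p * q - p * D q) (q ^ 2) = Fract (D p' * q' - p' * D q') (q' ^ 2)"
    using assms(2) by blast
next
  interpret derivation D by fact
  fix s
  assume "\<exists>p' q'. q' \<noteq> 0 \<and> Fract p q = Fract p' q' \<and> s = Fract (D p' * q' - p' * D q') (q' ^ 2)"
  then obtain p' q' where q': "q' \<noteq> 0" and eq: "Fract p q = Fract p' q'"
    and s: "s = Fract (D p' * q' - p' * D q') (q' ^ 2)"
    by blast
  have cross: "p * q' = p' * q"
    using eq q' assms(2) by (simp add: eq_fract)
  have "D (p * q') = D (p' * q)"
    using cross by simp
  then have "D p * q' + p * D q' = D p' * q + p' * D q"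
    by (simp add: mult)
  with cross have "(D p' * q' - p' * D q') * q ^ 2 = (D p * q - p * D q) * q' ^ 2"
    by algebra
  then show "s = Fract (D p * q - p * D q) (q ^ 2)"
    using q' assms(2) s by (simp add: eq_fract)
qed

lemma fgrad_emb: "fgrad (emb p) = (emb (dx p), emb (dy p), emb (dz p))"
  unfolding fgrad_def emb_def
  by (simp add: fderiv_Fract dx.derivation_axioms dy.derivation_axioms dz.derivation_axioms
      dx.one dy.one dz.one)

lemma fgrad_quotient:
  assumes "q \<noteq> 0"
  shows "fgrad (emb p * inverse (emb q)) =
    (emb (dx p * q - p * dx q) / emb (q ^ 2), emb (dy p * q - p * dy q) / emb (q ^ 2),
     emb (dz p * q - p * dz q) / emb (q ^ 2))"
  using assms unfolding fgrad_def emb_def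
  by (simp add: fderiv_Fract dx.derivation_axioms dy.derivation_axioms dz.derivation_axioms
      divide_fract del: power2_eq_square)

lemma detJac_emb_quotient:
  assumes "d \<noteq> 0"
  shows "detJac (emb a) (emb b) (emb c * inverse (emb d)) =
    emb (d * det3 (grad a) (grad b) (grad c) - c * det3 (grad a) (grad b) (grad d)) / emb (d ^ 2)"
proof -
  have emb_hom: "emb (p + q) = emb p + emb q" "emb (p - q) = emb p - emb q" "emb (p * q) = emb p * emb q"
    for p q by (simp_all add: emb_def)
  show ?thesis
    unfolding detJac_def fgrad_emb fgrad_quotient[OF assms] det3_def grad_def
    by (simp add: emb_hom divide_inverse) algebra
qed

theorem proposition1p21:
  fixes a b c d :: A
  assumes "d \<noteq> 0"
  shows "compatible (scale3 c (grad a)) (scale3 d (grad b)) \<longleftrightarrow>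
         detJac (emb a) (emb b) (emb c * inverse (emb d)) = 0"
proof -
  have emb_eq_0: "emb p = 0 \<longleftrightarrow> p = 0" for p
    by (simp add: emb_def eq_fract Zero_fract_def)
  show ?thesis
    unfolding compatible_iff_det3 detJac_emb_quotient[OF assms]
    using assms by (simp add: emb_eq_0)
qed

end
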